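(* Let $J=[a,b]$, $\gamma:J\to\mathbb{C}\setminus\Omega$ a $C^1$ path with $|\gamma'(\tau)|\le1$ for all $\tau\in J$, and $\eta:\mathbb{C}\to[0,\infty)$ a $1$-Lipschitz function with zero set $\Omega$. Let $D(\tau,\underline\zeta)=\eta(\dot\zeta_1)+\cdots+\eta(\dot\zeta_n)+\eta(\gamma(\tau)-S_n(\underline\zeta))$ and $X_i(\tau,\underline\zeta)=\frac{\eta(\dot\zeta_i)}{D(\tau,\underline\zeta)}\gamma'(\tau)$ for $i=1,\ldots,n$. Then for any $\tau\in J$ and $\underline\zeta,\underline\zeta'\in\mathcal S_\Omega^n$, \[ \sum_{i=1}^n|X_i(\tau,\underline\zeta')-X_i(\tau,\underline\zeta)|\le\frac{3}{D(\tau,\underline\zeta')}\sum_{i=1}^n|\dot\zeta'_i-\dot\zeta_i|. \]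
   Context: $\Omega\subset\mathbb{C}$ closed, discrete, stable under addition, $0\in\Omega$ (so $D>0$ everywhere). $\mathcal S_\Omega$: Riemann surface of classes, modulo homotopy with fixed endpoints, of paths $\gamma:[0,1]\to\mathbb{C}$ with $\gamma\equiv0$ or ($\gamma(0)=0$, $\gamma((0,1])\subset\mathbb{C}\setminus\Omega$), with projection $\pi_\Omega([\gamma])=\gamma(1)$; $\dot\zeta=\pi_\Omega(\zeta)$; $S_n(\underline\zeta)=\dot\zeta_1+\cdots+\dot\zeta_n$ for $\underline\zeta=(\zeta_1,\ldots,\zeta_n)\in\mathcal S_\Omega^n$. *)

theory Defs
  imports "HOL-Analysis.Analysis"
begin

definition adm_path :: "complex set \<Rightarrow> (real \<Rightarrow> complex) \<Rightarrow> bool" where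
  "adm_path \<Omega> g \<longleftrightarrow> path g \<and>
     ((\<forall>t\<in>{0..1}. g t = 0) \<or> (g 0 = 0 \<and> (\<forall>t\<in>{0<..1}. g t \<notin> \<Omega>)))"

definition adm_homotopic :: "complex set \<Rightarrow> (real \<Rightarrow> complex) \<Rightarrow> (real \<Rightarrow> complex) \<Rightarrow> bool" where
  "adm_homotopic \<Omega> g h \<longleftrightarrow> adm_path \<Omega> g \<and> adm_path \<Omega> h \<and>
     (\<exists>H :: real \<times> real \<Rightarrow> complex. continuous_on ({0..1} \<times> {0..1}) H \<and>
        (\<forall>t\<in>{0..1}. H (0, t) = g t \<and> H (1, t) = h t) \<and>
        (\<forall>s\<in>{0..1}. H (s, 0) = g 0 \<and> H (s, 1) = g 1 \<and> adm_path \<Omega> (\<lambda>t. H (s, t))))"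

text \<open>The Riemann surface S_Omega as the set of homotopy classes of admissible paths.\<close>
definition S_Omega :: "complex set \<Rightarrow> (real \<Rightarrow> complex) set set" where
  "S_Omega \<Omega> = {g. adm_path \<Omega> g} // {(g, h). adm_homotopic \<Omega> g h}"

definition pi_Omega :: "(real \<Rightarrow> complex) set \<Rightarrow> complex" where
  "pi_Omega c = (SOME g. g \<in> c) 1"

definition discrete_set :: "complex set \<Rightarrow> bool" where
  "discrete_set A \<longleftrightarrow> (\<forall>x\<in>A. \<exists>e>0. ball x e \<inter> A = {x})"

definition Ssum :: "nat \<Rightarrow> (nat \<Rightarrow> (real \<Rightarrow> complex) set) \<Rightarrow> complex" where
  "Ssum n \<zeta> = (\<Sum>i=1..n. pi_Omega (\<zeta> i))"

definition Dfun :: "(complex \<Rightarrow> real) \<Rightarrow> (real \<Rightarrow> complex) \<Rightarrow> nat \<Rightarrow> real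
                     \<Rightarrow> (nat \<Rightarrow> (real \<Rightarrow> complex) set) \<Rightarrow> real" where
  "Dfun \<eta> \<gamma> n \<tau> \<zeta> = (\<Sum>i=1..n. \<eta> (pi_Omega (\<zeta> i))) + \<eta> (\<gamma> \<tau> - Ssum n \<zeta>)"

definition Xfun :: "(complex \<Rightarrow> real) \<Rightarrow> (real \<Rightarrow> complex) \<Rightarrow> (real \<Rightarrow> complex) \<Rightarrow> nat \<Rightarrow> nat
                     \<Rightarrow> real \<Rightarrow> (nat \<Rightarrow> (real \<Rightarrow> complex) set) \<Rightarrow> complex" where
  "Xfun \<eta> \<gamma> \<gamma>' n i \<tau> \<zeta> = complex_of_real (\<eta> (pi_Omega (\<zeta> i)) / Dfun \<eta> \<gamma> n \<tau> \<zeta>) * \<gamma>' \<tau>"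

end

theory Submission
  imports Defs
begin

text \<open>
  With \<open>z\<^sub>i = \<pi>(\<zeta>\<^sub>i)\<close>, \<open>p\<^sub>i = \<eta>(z\<^sub>i)\<close> and \<open>\<delta> = \<Sum> |z'\<^sub>i - z\<^sub>i|\<close>: since \<open>\<eta>\<close> is 1-Lipschitz, each \<open>p\<^sub>i\<close>
  moves by at most \<open>|z'\<^sub>i - z\<^sub>i|\<close> and \<open>D\<close> by at most \<open>2\<delta>\<close>. Writing
  \<open>p'\<^sub>i/D' - p\<^sub>i/D = (p'\<^sub>i - p\<^sub>i)/D' + p\<^sub>i(D - D')/(D D')\<close> and summing with \<open>\<Sum> p\<^sub>i \<le> D\<close> gives
  \<open>\<delta>/D' + 2\<delta>/D'\<close>; \<open>|\<gamma>'| \<le> 1\<close> does the rest. \<open>D > 0\<close> because \<open>\<Omega>\<close> is the zero set of \<open>\<eta>\<close>, is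
  closed under addition, and misses \<open>\<gamma>(\<tau>)\<close>.
\<close>

lemma sum_mem_add_closed:
  assumes "0 \<in> S" and "\<And>x y. x \<in> S \<Longrightarrow> y \<in> S \<Longrightarrow> x + y \<in> S"
    and "\<And>i. i \<in> A \<Longrightarrow> f i \<in> S"
  shows "sum f A \<in> S"
proof (cases "finite A")
  case True
  then show ?thesis using assms(3) by (induction A rule: finite_induct) (auto intro: assms(1,2))
qed (simp add: assms(1))

lemma weighted_distance_pos:
  fixes \<eta> :: "'a::comm_ring \<Rightarrow> real"
  assumes "finite A" and nonneg: "\<And>x. \<eta> x \<ge> 0" and zeros: "{x. \<eta> x = 0} = \<Omega>"
    and "0 \<in> \<Omega>" and add: "\<And>x y. x \<in> \<Omega> \<Longrightarrow> y \<in> \<Omega> \<Longrightarrow> x + y \<in> \<Omega>"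
    and "w \<notin> \<Omega>"
  shows "(\<Sum>i\<in>A. \<eta> (z i)) + \<eta> (w - (\<Sum>i\<in>A. z i)) > 0"
proof (rule ccontr)
  assume "\<not> ?thesis"
  have zero_iff: "\<eta> x = 0 \<longleftrightarrow> x \<in> \<Omega>" for x using zeros by blast
  have "(\<Sum>i\<in>A. \<eta> (z i)) \<ge> 0" by (simp add: sum_nonneg nonneg)
  with \<open>\<not> ?thesis\<close> have sum0: "(\<Sum>i\<in>A. \<eta> (z i)) = 0" and rest0: "\<eta> (w - (\<Sum>i\<in>A. z i)) = 0"
    using nonneg[of "w - (\<Sum>i\<in>A. z i)"] by linarith+
  have "z i \<in> \<Omega>" if "i \<in> A" for i
    using sum0 sum_nonneg_eq_0_iff[OF \<open>finite A\<close>, of "\<lambda>i. \<eta> (z i)"] nonneg that zero_iff by simp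
  then have "(\<Sum>i\<in>A. z i) \<in> \<Omega>"
    using sum_mem_add_closed[OF \<open>0 \<in> \<Omega>\<close> add] by blast
  moreover have "w - (\<Sum>i\<in>A. z i) \<in> \<Omega>" using rest0 zero_iff by simp
  ultimately have "(\<Sum>i\<in>A. z i) + (w - (\<Sum>i\<in>A. z i)) \<in> \<Omega>" by (rule add)
  with \<open>w \<notin> \<Omega>\<close> show False by simp
qed

lemma weighted_distance_lipschitz:
  fixes \<eta> :: "'a::real_normed_vector \<Rightarrow> real"
  assumes lip: "\<And>x y. \<bar>\<eta> x - \<eta> y\<bar> \<le> dist x y"
  shows "\<bar>((\<Sum>i\<in>A. \<eta> (z i)) + \<eta> (w - (\<Sum>i\<in>A. z i)))
           - ((\<Sum>i\<in>A. \<eta> (z' i)) + \<eta> (w - (\<Sum>i\<in>A. z' i)))\<bar>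
         \<le> 2 * (\<Sum>i\<in>A. norm (z' i - z i))"
proof -
  let ?\<delta> = "\<Sum>i\<in>A. norm (z' i - z i)"
  have "\<bar>(\<Sum>i\<in>A. \<eta> (z i)) - (\<Sum>i\<in>A. \<eta> (z' i))\<bar> = \<bar>\<Sum>i\<in>A. \<eta> (z i) - \<eta> (z' i)\<bar>"
    by (simp add: sum_subtractf)
  also have "\<dots> \<le> (\<Sum>i\<in>A. \<bar>\<eta> (z i) - \<eta> (z' i)\<bar>)"
    by (rule sum_abs)
  also have "\<dots> \<le> ?\<delta>"
    by (rule sum_mono) (metis lip dist_norm dist_commute)
  finally have terms: "\<bar>(\<Sum>i\<in>A. \<eta> (z i)) - (\<Sum>i\<in>A. \<eta> (z' i))\<bar> \<le> ?\<delta>" .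
  have "\<bar>\<eta> (w - (\<Sum>i\<in>A. z i)) - \<eta> (w - (\<Sum>i\<in>A. z' i))\<bar> \<le> norm ((\<Sum>i\<in>A. z' i) - (\<Sum>i\<in>A. z i))"
    using lip[of "w - (\<Sum>i\<in>A. z i)" "w - (\<Sum>i\<in>A. z' i)"] by (simp add: dist_norm)
  also have "(\<Sum>i\<in>A. z' i) - (\<Sum>i\<in>A. z i) = (\<Sum>i\<in>A. z' i - z i)"
    by (simp add: sum_subtractf)
  also have "norm \<dots> \<le> ?\<delta>" by (rule norm_sum)
  finally show ?thesis using terms by linarith
qed

lemma quotient_diff_le:
  fixes p p' D D' :: real
  assumes "D > 0" "D' > 0" "p \<ge> 0"
  shows "\<bar>p' / D' - p / D\<bar> \<le> \<bar>p' - p\<bar> / D' + p * \<bar>D - D'\<bar> / (D * D')"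
proof -
  have "\<bar>p' / D' - p / D\<bar> = \<bar>(p' - p) / D' + p * (D - D') / (D * D')\<bar>"
    using assms by (simp add: field_simps)
  also have "\<dots> \<le> \<bar>(p' - p) / D'\<bar> + \<bar>p * (D - D') / (D * D')\<bar>"
    by (rule abs_triangle_ineq)
  also have "\<dots> = \<bar>p' - p\<bar> / D' + p * \<bar>D - D'\<bar> / (D * D')"
    using assms by (simp add: abs_mult)
  finally show ?thesis .
qed

lemma sum_quotient_diff_le:
  fixes p p' d :: "'i \<Rightarrow> real" and D D' :: real
  assumes "D > 0" "D' > 0" and p_nonneg: "\<And>i. i \<in> A \<Longrightarrow> p i \<ge> 0"
    and p_le: "(\<Sum>i\<in>A. p i) \<le> D"
    and p_diff: "\<And>i. i \<in> A \<Longrightarrow> \<bar>p' i - p i\<bar> \<le> d i"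
    and D_diff: "\<bar>D - D'\<bar> \<le> 2 * (\<Sum>i\<in>A. d i)"
  shows "(\<Sum>i\<in>A. \<bar>p' i / D' - p i / D\<bar>) \<le> 3 / D' * (\<Sum>i\<in>A. d i)"
proof -
  let ?\<delta> = "\<Sum>i\<in>A. d i"
  have "\<bar>p' i / D' - p i / D\<bar> \<le> d i / D' + p i * (2 * ?\<delta>) / (D * D')" if "i \<in> A" for i
  proof -
    have "\<bar>p' i - p i\<bar> / D' \<le> d i / D'"
      using \<open>D' > 0\<close> p_diff[OF that] by (simp add: divide_right_mono)
    moreover have "p i * \<bar>D - D'\<bar> / (D * D') \<le> p i * (2 * ?\<delta>) / (D * D')"
      using assms D_diff p_nonneg[OF that] by (simp add: divide_right_mono mult_left_mono)
    ultimately show ?thesis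
      using quotient_diff_le[OF \<open>D > 0\<close> \<open>D' > 0\<close> p_nonneg[OF that], of "p' i"] by linarith
  qed
  then have "(\<Sum>i\<in>A. \<bar>p' i / D' - p i / D\<bar>) \<le> (\<Sum>i\<in>A. d i / D' + p i * (2 * ?\<delta>) / (D * D'))"
    by (rule sum_mono)
  also have "\<dots> = ?\<delta> / D' + (\<Sum>i\<in>A. p i) * (2 * ?\<delta>) / (D * D')"
    by (simp add: sum.distrib sum_divide_distrib sum_distrib_right)
  also have "(\<Sum>i\<in>A. p i) * (2 * ?\<delta>) / (D * D') \<le> D * (2 * ?\<delta>) / (D * D')"
    using assms D_diff by (intro divide_right_mono mult_right_mono) auto
  also have "?\<delta> / D' + D * (2 * ?\<delta>) / (D * D') = 3 / D' * ?\<delta>"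
    using \<open>D > 0\<close> by (simp add: field_simps)
  finally show ?thesis by simp
qed

theorem lemma3:
  fixes \<Omega> :: "complex set" and a b :: real and \<gamma> \<gamma>' :: "real \<Rightarrow> complex"
    and \<eta> :: "complex \<Rightarrow> real" and n :: nat and \<tau> :: real
    and \<zeta> \<zeta>' :: "nat \<Rightarrow> (real \<Rightarrow> complex) set"
  assumes closed: "closed \<Omega>" and disc: "discrete_set \<Omega>"
    and add: "\<And>x y. x \<in> \<Omega> \<Longrightarrow> y \<in> \<Omega> \<Longrightarrow> x + y \<in> \<Omega>"
    and zero: "0 \<in> \<Omega>"
    and gamma_range: "\<And>t. t \<in> {a..b} \<Longrightarrow> \<gamma> t \<notin> \<Omega>"
    and gamma_deriv: "\<And>t. t \<in> {a..b} \<Longrightarrow> (\<gamma> has_vector_derivative \<gamma>' t) (at t within {a..b})"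
    and gamma_C1: "continuous_on {a..b} \<gamma>'"
    and gamma_bound: "\<And>t. t \<in> {a..b} \<Longrightarrow> norm (\<gamma>' t) \<le> 1"
    and eta_nonneg: "\<And>z. \<eta> z \<ge> 0"
    and eta_lip: "\<And>z w. \<bar>\<eta> z - \<eta> w\<bar> \<le> dist z w"
    and eta_zeros: "{z. \<eta> z = 0} = \<Omega>"
    and tau: "\<tau> \<in> {a..b}"
    and zeta: "\<And>i. i \<in> {1..n} \<Longrightarrow> \<zeta> i \<in> S_Omega \<Omega>"
    and zeta': "\<And>i. i \<in> {1..n} \<Longrightarrow> \<zeta>' i \<in> S_Omega \<Omega>"
  shows "(\<Sum>i=1..n. norm (Xfun \<eta> \<gamma> \<gamma>' n i \<tau> \<zeta>' - Xfun \<eta> \<gamma> \<gamma>' n i \<tau> \<zeta>))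
         \<le> 3 / Dfun \<eta> \<gamma> n \<tau> \<zeta>' * (\<Sum>i=1..n. norm (pi_Omega (\<zeta>' i) - pi_Omega (\<zeta> i)))"
proof -
  define z z' where "z i = pi_Omega (\<zeta> i)" and "z' i = pi_Omega (\<zeta>' i)" for i
  define D D' where "D = Dfun \<eta> \<gamma> n \<tau> \<zeta>" and "D' = Dfun \<eta> \<gamma> n \<tau> \<zeta>'"
  have D_eq: "D = (\<Sum>i=1..n. \<eta> (z i)) + \<eta> (\<gamma> \<tau> - (\<Sum>i=1..n. z i))"
    and D'_eq: "D' = (\<Sum>i=1..n. \<eta> (z' i)) + \<eta> (\<gamma> \<tau> - (\<Sum>i=1..n. z' i))"
    unfolding D_def D'_def z_def z'_def Dfun_def Ssum_def by simp_all
  have pos: "D > 0" "D' > 0"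
    unfolding D_eq D'_eq using gamma_range[OF tau]
    by (auto intro!: weighted_distance_pos[OF _ eta_nonneg eta_zeros zero add])
  have "norm (Xfun \<eta> \<gamma> \<gamma>' n i \<tau> \<zeta>' - Xfun \<eta> \<gamma> \<gamma>' n i \<tau> \<zeta>) \<le> \<bar>\<eta> (z' i) / D' - \<eta> (z i) / D\<bar>" for i
  proof -
    have "Xfun \<eta> \<gamma> \<gamma>' n i \<tau> \<zeta>' - Xfun \<eta> \<gamma> \<gamma>' n i \<tau> \<zeta> = of_real (\<eta> (z' i) / D' - \<eta> (z i) / D) * \<gamma>' \<tau>"
      unfolding Xfun_def z_def z'_def D_def D'_def by (simp add: algebra_simps)
    then have "norm (Xfun \<eta> \<gamma> \<gamma>' n i \<tau> \<zeta>' - Xfun \<eta> \<gamma> \<gamma>' n i \<tau> \<zeta>)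
        = \<bar>\<eta> (z' i) / D' - \<eta> (z i) / D\<bar> * norm (\<gamma>' \<tau>)"
      by (simp only: norm_mult norm_of_real)
    then show ?thesis
      using gamma_bound[OF tau] by (simp add: mult_left_le)
  qed
  then have "(\<Sum>i=1..n. norm (Xfun \<eta> \<gamma> \<gamma>' n i \<tau> \<zeta>' - Xfun \<eta> \<gamma> \<gamma>' n i \<tau> \<zeta>))
      \<le> (\<Sum>i=1..n. \<bar>\<eta> (z' i) / D' - \<eta> (z i) / D\<bar>)"
    by (rule sum_mono)
  also have "\<dots> \<le> 3 / D' * (\<Sum>i=1..n. norm (z' i - z i))"
  proof (rule sum_quotient_diff_le[OF pos])
    show "(\<Sum>i=1..n. \<eta> (z i)) \<le> D" unfolding D_eq using eta_nonneg by simp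
    show "\<bar>\<eta> (z' i) - \<eta> (z i)\<bar> \<le> norm (z' i - z i)" for i
      using eta_lip[of "z' i" "z i"] by (simp add: dist_norm)
    show "\<bar>D - D'\<bar> \<le> 2 * (\<Sum>i=1..n. norm (z' i - z i))"
      unfolding D_eq D'_eq by (rule weighted_distance_lipschitz[OF eta_lip])
  qed (rule eta_nonneg)
  finally show ?thesis unfolding z_def z'_def D'_def .
qed

end
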